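(* Fix linearly independent $f,g,h\in S_1\oplus S_2$. Then $\dim\big(\pi_{1,2}P_\xi(S_3)+[f,g,h]\big)=5$ for almost every $\xi\in\mathbb{R}^2$.
   Context: For $j\ge0$, $S_j$ is the real vector space of homogeneous polynomials of degree $j$ in $r,s$; $[\cdot]$ denotes linear span. For $\xi=(a,b)\in\mathbb{R}^2$ and a polynomial $f$, $P_\xi f(r,s)=f(\xi)+\partial_rf(\xi)(r-a)+\partial_sf(\xi)(s-b)+\frac12\partial_{rr}f(\xi)(r-a)^2+\partial_{rs}f(\xi)(r-a)(s-b)+\frac12\partial_{ss}f(\xi)(s-b)^2$ (second-order Taylor polynomial at $\xi$), an element of $S_0\oplus S_1\oplus S_2$. $\pi_{1,2}$ is the projection of $S_0\oplus S_1\oplus S_2$ onto $S_1\oplus S_2$ along $S_0$. *)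

theory Defs
  imports "HOL-Analysis.Analysis" "HOL-Library.Function_Algebras" "HOL-Library.Set_Algebras"
begin

text \<open>Polynomials in r,s are represented as real functions on real \<times> real;
  the real vector space structure is pointwise (addition from Function_Algebras,
  scalar multiplication fscale).\<close>

definition fscale :: "real \<Rightarrow> (real \<times> real \<Rightarrow> real) \<Rightarrow> (real \<times> real \<Rightarrow> real)" where
  "fscale c p = (\<lambda>x. c * p x)"

definition S :: "nat \<Rightarrow> (real \<times> real \<Rightarrow> real) set" where
  "S j = {p. \<exists>c :: nat \<Rightarrow> real. p = (\<lambda>(r,s). \<Sum>i\<le>j. c i * r ^ i * s ^ (j - i))}"

definition S12 :: "(real \<times> real \<Rightarrow> real) set" where
  "S12 = {p + q | p q. p \<in> S 1 \<and> q \<in> S 2}"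

definition pdr :: "(real \<times> real \<Rightarrow> real) \<Rightarrow> real \<times> real \<Rightarrow> real" where
  "pdr p = (\<lambda>(a,b). deriv (\<lambda>t. p (t,b)) a)"

definition pds :: "(real \<times> real \<Rightarrow> real) \<Rightarrow> real \<times> real \<Rightarrow> real" where
  "pds p = (\<lambda>(a,b). deriv (\<lambda>t. p (a,t)) b)"

definition taylor2 :: "real \<times> real \<Rightarrow> (real \<times> real \<Rightarrow> real) \<Rightarrow> (real \<times> real \<Rightarrow> real)" where
  "taylor2 \<xi> p = (\<lambda>(r,s). p \<xi> + pdr p \<xi> * (r - fst \<xi>) + pds p \<xi> * (s - snd \<xi>)
      + 1/2 * pdr (pdr p) \<xi> * (r - fst \<xi>)^2
      + pds (pdr p) \<xi> * (r - fst \<xi>) * (s - snd \<xi>)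
      + 1/2 * pds (pds p) \<xi> * (s - snd \<xi>)^2)"

text \<open>Projection of S0+S1+S2 onto S1+S2 along S0 (remove the constant term).\<close>
definition pi12 :: "(real \<times> real \<Rightarrow> real) \<Rightarrow> (real \<times> real \<Rightarrow> real)" where
  "pi12 p = (\<lambda>x. p x - p (0,0))"

end

theory Submission
  imports Defs "HOL-Computational_Algebra.Polynomial"
begin

text \<open>For \<open>\<xi> \<noteq> 0\<close>, the map \<open>\<pi>\<^sub>1\<^sub>,\<^sub>2 P\<^sub>\<xi>\<close> sends a cubic \<open>c\<close> to \<open>c(z) - c(z - \<xi>) - c(\<xi>)\<close>,
  whose gradient vanishes at \<open>\<xi>/2\<close> because \<open>\<nabla>c\<close> is even; in fact its image is the whole
  3-dimensional space of those \<open>p \<in> S\<^sub>1 \<oplus> S\<^sub>2\<close> with \<open>\<nabla>p(\<xi>/2) = 0\<close>. So the sum with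
  \<open>[f, g, h]\<close> is all of the 5-dimensional space \<open>S\<^sub>1 \<oplus> S\<^sub>2\<close> as soon as two of \<open>f, g, h\<close>
  have linearly independent gradients at \<open>\<xi>/2\<close>, i.e. a nonzero Jacobian there. That Jacobian
  is a polynomial in \<open>\<xi>\<close>, hence nonzero almost everywhere unless it vanishes identically. It
  cannot vanish identically for all three pairs: its constant and top-degree coefficients would
  force the linear parts of \<open>f, g, h\<close> to be pairwise proportional, and likewise their quadratic
  parts, so \<open>f, g, h\<close> would lie in a plane.\<close>

definition minors_vanish :: "'a::euclidean_space \<Rightarrow> 'a \<Rightarrow> bool" where
  "minors_vanish u v \<longleftrightarrow> (\<forall>i\<in>Basis. \<forall>j\<in>Basis. (u \<bullet> i) * (v \<bullet> j) = (u \<bullet> j) * (v \<bullet> i))"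

lemma minors_vanish_refl: "minors_vanish u u"
  by (simp add: minors_vanish_def mult.commute)

lemma minors_vanish_sym: "minors_vanish u v \<Longrightarrow> minors_vanish v u"
  by (simp add: minors_vanish_def mult.commute)

lemma subset_span_singleton_if_minors_vanish:
  fixes V :: "'a::euclidean_space set"
  assumes "\<And>u v. u \<in> V \<Longrightarrow> v \<in> V \<Longrightarrow> minors_vanish u v"
  shows "\<exists>p. V \<subseteq> span {p}"
proof (cases "V \<subseteq> {0}")
  case True
  then show ?thesis by (intro exI[of _ 0]) simp
next
  case False
  then obtain u where u: "u \<in> V" "u \<noteq> 0" by auto
  then obtain i where i: "i \<in> Basis" "u \<bullet> i \<noteq> 0"
    using euclidean_all_zero_iff by blast
  have "v = (v \<bullet> i / (u \<bullet> i)) *\<^sub>R u" if "v \<in> V" for v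
  proof (rule euclidean_eqI)
    fix j :: 'a assume "j \<in> Basis"
    then show "v \<bullet> j = (v \<bullet> i / (u \<bullet> i)) *\<^sub>R u \<bullet> j"
      using assms[OF u(1) that] i by (simp add: minors_vanish_def field_simps)
  qed
  then show ?thesis
    by (metis span_singleton rangeI subsetI)
qed

lemma exists_combination_if_det_neq_0:
  fixes u v w :: "real \<times> real"
  assumes "fst u * snd v - snd u * fst v \<noteq> 0"
  shows "\<exists>s t. w = s *\<^sub>R u + t *\<^sub>R v"
proof -
  obtain u1 u2 v1 v2 w1 w2 where uvw: "u = (u1, u2)" "v = (v1, v2)" "w = (w1, w2)"
    by (metis prod.exhaust)
  define d where "d = u1 * v2 - u2 * v1"
  have "d \<noteq> 0"
    using assms by (simp add: uvw d_def)
  have "w = ((w1 * v2 - w2 * v1) / d) *\<^sub>R u + ((u1 * w2 - u2 * w1) / d) *\<^sub>R v"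
    using \<open>d \<noteq> 0\<close> unfolding uvw by (simp add: field_simps) (simp add: d_def algebra_simps)
  then show ?thesis by blast
qed

definition poly2 :: "real poly poly \<Rightarrow> real \<times> real \<Rightarrow> real" where
  "poly2 p = (\<lambda>(x, y). poly (map_poly (\<lambda>c. poly c x) p) y)"

lemma poly2_eq_sum: "poly2 p (x, y) = (\<Sum>i\<le>degree p. poly (coeff p i) x * y ^ i)"
proof -
  let ?q = "map_poly (\<lambda>c. poly c x) p"
  have "poly ?q y = poly (\<Sum>i\<le>degree p. monom (coeff ?q i) i) y"
    by (simp add: poly_as_sum_of_monoms' map_poly_degree_leq)
  then show ?thesis
    by (simp add: poly2_def poly_sum poly_monom coeff_map_poly)
qed

lemma borel_measurable_poly2: "poly2 p \<in> borel_measurable borel"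
proof -
  have "poly2 p = (\<lambda>z. \<Sum>i\<le>degree p. poly (coeff p i) (fst z) * snd z ^ i)"
    by (auto simp: fun_eq_iff poly2_eq_sum)
  also have "\<dots> \<in> borel_measurable borel"
    by (intro borel_measurable_continuous_onI continuous_intros)
  finally show ?thesis .
qed

lemma AE_poly2_neq_0:
  assumes "p \<noteq> 0"
  shows "AE z in lborel. poly2 p z \<noteq> 0"
proof -
  define E where "E = {x. poly (lead_coeff p) x = 0}"
  have "finite E"
    using assms by (simp add: E_def poly_roots_finite)
  have "AE y in lborel. poly2 p (x, y) \<noteq> 0" if "x \<notin> E" for x
  proof -
    have "map_poly (\<lambda>c. poly c x) p \<noteq> 0"
    proof
      assume "map_poly (\<lambda>c. poly c x) p = 0"
      then have "coeff (map_poly (\<lambda>c. poly c x) p) (degree p) = 0" by simp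
      with that show False by (simp add: E_def coeff_map_poly)
    qed
    then have "finite {y. poly2 p (x, y) = 0}"
      by (simp add: poly2_def poly_roots_finite)
    then show ?thesis
      by (intro AE_I'[OF finite_imp_null_set_lborel]) auto
  qed
  then have "AE x in lborel. AE y in lborel. poly2 p (x, y) \<noteq> 0"
    by (intro AE_I'[OF finite_imp_null_set_lborel[OF \<open>finite E\<close>]]) auto
  moreover have "{z \<in> space (lborel \<Otimes>\<^sub>M lborel). poly2 p (fst z, snd z) \<noteq> 0}
      \<in> sets (lborel \<Otimes>\<^sub>M lborel)"
    using borel_measurable_poly2[of p] unfolding lborel_prod prod.collapse by measurable
  ultimately have "AE z in lborel \<Otimes>\<^sub>M lborel. poly2 p (fst z, snd z) \<noteq> 0"
    using lborel_pair.AE_pair_iff[where P = "\<lambda>x y. poly2 p (x, y) \<noteq> 0"] by simp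
  then show ?thesis
    by (simp only: lborel_prod prod.collapse)
qed

interpretation F: vector_space fscale
  by unfold_locales (auto simp: fscale_def algebra_simps fun_eq_iff)

type_synonym lq_coeffs = "(real \<times> real) \<times> real \<times> real \<times> real"

fun lin_quad :: "lq_coeffs \<Rightarrow> real \<times> real \<Rightarrow> real" where
  "lin_quad ((a1, a2), (b1, b2, b3)) (r, s) = a1 * r + a2 * s + b1 * r^2 + b2 * r * s + b3 * s^2"

lemma linear_lin_quad: "Vector_Spaces.linear scaleR fscale lin_quad"
  by unfold_locales (auto simp: fun_eq_iff fscale_def algebra_simps split: prod.splits)

interpretation L: Vector_Spaces.linear scaleR fscale lin_quad
  rewrites "module.span scaleR = span" and "module.subspace scaleR = subspace"
  by (rule linear_lin_quad) (simp_all add: span_raw_def subspace_raw_def)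

lemma inj_lin_quad: "inj lin_quad"
proof (rule injI)
  fix k l assume "lin_quad k = lin_quad l"
  then have e: "lin_quad k z = lin_quad l z" for z by simp
  show "k = l"
    using e[of "(1,0)"] e[of "(-1,0)"] e[of "(0,1)"] e[of "(0,-1)"] e[of "(1,1)"]
    by (cases k; cases l) (auto split: prod.splits)
qed

lemma dim_range_lin_quad: "F.dim (range lin_quad) = 5"
proof -
  interpret finite_dimensional_vector_space_pair_1 scaleR Basis fscale ..
  show ?thesis
    using dim_image_eq[OF linear_lin_quad, of UNIV] inj_lin_quad by simp
qed

lemma subspace_range_lin_quad: "F.subspace (range lin_quad)"
  by (rule L.subspace_image) (rule subspace_UNIV)

lemma S12_subset_range_lin_quad: "S12 \<subseteq> range lin_quad"
proof
  fix p assume "p \<in> S12"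
  then obtain c d :: "nat \<Rightarrow> real" where
    p: "p = (\<lambda>(r, s). \<Sum>i\<le>1. c i * r ^ i * s ^ (1 - i)) + (\<lambda>(r, s). \<Sum>i\<le>2. d i * r ^ i * s ^ (2 - i))"
    by (auto simp: S12_def S_def)
  have "p = lin_quad ((c 1, c 0), (d 2, d 1, d 0))"
    by (auto simp: p fun_eq_iff eval_nat_numeral algebra_simps)
  then show "p \<in> range lin_quad" by blast
qed

lemma pdr_lin_quad: "pdr (lin_quad ((a1, a2), (b1, b2, b3))) (x, y) = a1 + 2 * b1 * x + b2 * y"
  unfolding pdr_def
  by (simp, rule DERIV_imp_deriv) (auto intro!: derivative_eq_intros simp: algebra_simps)

lemma pds_lin_quad: "pds (lin_quad ((a1, a2), (b1, b2, b3))) (x, y) = a2 + b2 * x + 2 * b3 * y"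
  unfolding pds_def
  by (simp, rule DERIV_imp_deriv) (auto intro!: derivative_eq_intros simp: algebra_simps)

definition mid_grad :: "lq_coeffs \<Rightarrow> real \<times> real \<Rightarrow> real \<times> real" where
  "mid_grad k \<xi> = (pdr (lin_quad k) ((1/2) *\<^sub>R \<xi>), pds (lin_quad k) ((1/2) *\<^sub>R \<xi>))"

lemma mid_grad_simps:
  "mid_grad ((a1, a2), (b1, b2, b3)) (x, y) = (a1 + b1 * x + b2 * y / 2, a2 + b2 * x / 2 + b3 * y)"
  by (simp add: mid_grad_def pdr_lin_quad pds_lin_quad)

lemma linear_mid_grad: "linear (\<lambda>k. mid_grad k \<xi>)"
proof -
  obtain x y where \<xi>: "\<xi> = (x, y)" by fastforce
  show ?thesis
    by (rule linearI) (auto simp: \<xi> mid_grad_simps algebra_simps split: prod.splits)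
qed

fun crit_coeffs :: "real \<times> real \<Rightarrow> real \<times> real \<times> real \<Rightarrow> lq_coeffs" where
  "crit_coeffs (x, y) (b1, b2, b3) = ((- b1 * x - b2 * y / 2, - b2 * x / 2 - b3 * y), (b1, b2, b3))"

lemma mid_grad_eq_0_iff: "mid_grad k \<xi> = 0 \<longleftrightarrow> k = crit_coeffs \<xi> (snd k)"
proof -
  obtain x y where \<xi>: "\<xi> = (x, y)" by fastforce
  obtain a1 a2 b1 b2 b3 where k: "k = ((a1, a2), (b1, b2, b3))" by (metis prod.exhaust)
  show ?thesis
    by (auto simp: \<xi> k mid_grad_simps zero_prod_def algebra_simps)
qed

fun cubic :: "real \<times> real \<times> real \<times> real \<Rightarrow> real \<times> real \<Rightarrow> real" where
  "cubic (c0, c1, c2, c3) (r, s) = c0 * s^3 + c1 * r * s^2 + c2 * r^2 * s + c3 * r^3"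

lemma S3_eq_range_cubic: "S 3 = range cubic"
proof (intro equalityI subsetI)
  have sum3: "(\<Sum>i\<le>3. c i * r ^ i * s ^ (3 - i)) = cubic (c 0, c 1, c 2, c 3) (r, s)"
    for c :: "nat \<Rightarrow> real" and r s
    by (simp add: eval_nat_numeral algebra_simps)
  fix p
  show "p \<in> range cubic" if "p \<in> S 3"
  proof -
    from that obtain c where "p = (\<lambda>(r, s). \<Sum>i\<le>3. c i * r ^ i * s ^ (3 - i))"
      by (auto simp: S_def)
    then have "p = cubic (c 0, c 1, c 2, c 3)"
      by (simp add: fun_eq_iff sum3)
    then show ?thesis by blast
  qed
  show "p \<in> S 3" if "p \<in> range cubic"
  proof -
    from that obtain c0 c1 c2 c3 where "p = cubic (c0, c1, c2, c3)"
      by (metis prod_cases4 rangeE)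
    then have "p = (\<lambda>(r, s). \<Sum>i\<le>3. [c0, c1, c2, c3] ! i * r ^ i * s ^ (3 - i))"
      by (simp add: fun_eq_iff sum3 numeral_eq_Suc)
    then show ?thesis
      unfolding S_def by blast
  qed
qed

lemma pdr_cubic: "pdr (cubic (c0, c1, c2, c3)) = lin_quad ((0, 0), (3 * c3, 2 * c2, c1))"
proof -
  have "deriv (\<lambda>t. cubic (c0, c1, c2, c3) (t, y)) x = lin_quad ((0, 0), (3 * c3, 2 * c2, c1)) (x, y)" for x y
    by (rule DERIV_imp_deriv) (auto intro!: derivative_eq_intros simp: algebra_simps power2_eq_square)
  then show ?thesis by (auto simp: pdr_def fun_eq_iff)
qed

lemma pds_cubic: "pds (cubic (c0, c1, c2, c3)) = lin_quad ((0, 0), (c2, 2 * c1, 3 * c0))"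
proof -
  have "deriv (\<lambda>t. cubic (c0, c1, c2, c3) (x, t)) y = lin_quad ((0, 0), (c2, 2 * c1, 3 * c0)) (x, y)" for x y
    by (rule DERIV_imp_deriv) (auto intro!: derivative_eq_intros simp: algebra_simps power2_eq_square)
  then show ?thesis by (auto simp: pds_def fun_eq_iff)
qed

text \<open>\<open>(\<partial>\<^sub>r\<^sub>r c / 2, \<partial>\<^sub>r\<^sub>s c, \<partial>\<^sub>s\<^sub>s c / 2)\<close> at \<open>\<xi>\<close>: the quadratic part of \<open>P\<^sub>\<xi> c\<close>.\<close>

fun cubic_hessian :: "real \<times> real \<Rightarrow> real \<times> real \<times> real \<times> real \<Rightarrow> real \<times> real \<times> real" where
  "cubic_hessian (x, y) (c0, c1, c2, c3) = (3 * c3 * x + c2 * y, 2 * c2 * x + 2 * c1 * y, c1 * x + 3 * c0 * y)"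

lemma pi12_taylor2_cubic:
  "pi12 (taylor2 \<xi> (cubic c)) = lin_quad (crit_coeffs \<xi> (cubic_hessian \<xi> c))"
proof -
  obtain x y where \<xi>: "\<xi> = (x, y)" by fastforce
  obtain c0 c1 c2 c3 where c: "c = (c0, c1, c2, c3)" by (metis prod_cases4)
  show ?thesis
    unfolding \<xi> c pi12_def taylor2_def pdr_cubic pds_cubic pdr_lin_quad pds_lin_quad
    by (auto simp: fun_eq_iff field_simps power2_eq_square power3_eq_cube)
qed

lemma surj_cubic_hessian:
  assumes "\<xi> \<noteq> 0"
  shows "surj (cubic_hessian \<xi>)"
  unfolding surj_def
proof
  fix b :: "real \<times> real \<times> real"
  obtain x y where \<xi>: "\<xi> = (x, y)" by fastforce
  obtain b1 b2 b3 where b: "b = (b1, b2, b3)" by (metis prod.exhaust)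
  show "\<exists>c. b = cubic_hessian \<xi> c"
  proof (cases "x = 0")
    case False
    define c1 where "c1 = b3 / x"
    define c2 where "c2 = (b2 - 2 * c1 * y) / (2 * x)"
    define c3 where "c3 = (b1 - c2 * y) / (3 * x)"
    have "c1 * x = b3" "2 * c2 * x + 2 * c1 * y = b2" "3 * c3 * x + c2 * y = b1"
      using False by (simp_all add: c1_def c2_def c3_def field_simps del: times_divide_eq_left)
    then have "b = cubic_hessian \<xi> (0, c1, c2, c3)"
      by (simp add: \<xi> b)
    then show ?thesis by blast
  next
    case True
    then have "y \<noteq> 0" using assms by (simp add: \<xi> zero_prod_def)
    have "b = cubic_hessian \<xi> (b3 / (3 * y), b2 / (2 * y), b1 / y, 0)"
      using True \<open>y \<noteq> 0\<close> by (simp add: \<xi> b)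
    then show ?thesis by blast
  qed
qed

lemma taylor_image_subset_range_lin_quad: "(\<lambda>p. pi12 (taylor2 \<xi> p)) ` S 3 \<subseteq> range lin_quad"
  by (auto simp: S3_eq_range_cubic pi12_taylor2_cubic)

lemma taylor_image_plus_span_eq_range_lin_quad:
  assumes "\<xi> \<noteq> 0" and "V \<subseteq> range lin_quad" and "lin_quad K \<in> V" and "lin_quad L \<in> V"
    and "fst (mid_grad K \<xi>) * snd (mid_grad L \<xi>) - snd (mid_grad K \<xi>) * fst (mid_grad L \<xi>) \<noteq> 0"
  shows "(\<lambda>p. pi12 (taylor2 \<xi> p)) ` S 3 + F.span V = range lin_quad"
proof (intro equalityI subsetI)
  fix q assume "q \<in> (\<lambda>p. pi12 (taylor2 \<xi> p)) ` S 3 + F.span V"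
  then obtain a b where "q = a + b" "a \<in> (\<lambda>p. pi12 (taylor2 \<xi> p)) ` S 3" "b \<in> F.span V"
    by (auto elim!: set_plus_elim)
  moreover have "F.span V \<subseteq> range lin_quad"
    using assms(2) subspace_range_lin_quad by (rule F.span_minimal)
  ultimately have "a \<in> range lin_quad" "b \<in> range lin_quad"
    using taylor_image_subset_range_lin_quad by blast+
  then show "q \<in> range lin_quad"
    using F.subspace_add[OF subspace_range_lin_quad] \<open>q = a + b\<close> by simp
next
  fix q assume "q \<in> range lin_quad"
  then obtain k where q: "q = lin_quad k" by blast
  obtain s t where st: "mid_grad k \<xi> = s *\<^sub>R mid_grad K \<xi> + t *\<^sub>R mid_grad L \<xi>"
    using exists_combination_if_det_neq_0 assms(5) by blast
  define k' where "k' = k - (s *\<^sub>R K + t *\<^sub>R L)"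
  have "mid_grad k' \<xi> = 0"
    using st by (simp add: k'_def linear_diff[OF linear_mid_grad] linear_add[OF linear_mid_grad]
        linear_scale[OF linear_mid_grad])
  then have "k' = crit_coeffs \<xi> (snd k')"
    by (simp add: mid_grad_eq_0_iff)
  moreover obtain c where "snd k' = cubic_hessian \<xi> c"
    using surj_cubic_hessian[OF assms(1)] by (metis surjD)
  ultimately have "lin_quad k' = pi12 (taylor2 \<xi> (cubic c))"
    by (simp add: pi12_taylor2_cubic)
  then have "lin_quad k' \<in> (\<lambda>p. pi12 (taylor2 \<xi> p)) ` S 3"
    by (simp add: S3_eq_range_cubic)
  moreover have "fscale s (lin_quad K) + fscale t (lin_quad L) \<in> F.span V"
    using assms(3,4) by (intro F.span_add F.span_scale F.span_base)
  moreover have "q = lin_quad k' + (fscale s (lin_quad K) + fscale t (lin_quad L))"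
    by (simp add: q k'_def L.diff L.add L.scale)
  ultimately show "q \<in> (\<lambda>p. pi12 (taylor2 \<xi> p)) ` S 3 + F.span V"
    by (simp add: set_plus_intro)
qed

fun jacobian_poly :: "lq_coeffs \<Rightarrow> lq_coeffs \<Rightarrow> real poly poly" where
  "jacobian_poly ((a1, a2), (b1, b2, b3)) ((c1, c2), (d1, d2, d3)) =
    [:[:a1 * c2 - a2 * c1, a1 * d2 / 2 + b1 * c2 - a2 * d1 - b2 * c1 / 2, (b1 * d2 - b2 * d1) / 2:],
      [:a1 * d3 + b2 * c2 / 2 - a2 * d2 / 2 - b3 * c1, b1 * d3 - b3 * d1:],
      [:(b2 * d3 - b3 * d2) / 2:]:]"

lemma poly2_jacobian_poly:
  "poly2 (jacobian_poly K L) \<xi> =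
    fst (mid_grad K \<xi>) * snd (mid_grad L \<xi>) - snd (mid_grad K \<xi>) * fst (mid_grad L \<xi>)"
proof -
  obtain x y where \<xi>: "\<xi> = (x, y)" by fastforce
  obtain a1 a2 b1 b2 b3 where K: "K = ((a1, a2), (b1, b2, b3))" by (metis prod.exhaust)
  obtain c1 c2 d1 d2 d3 where L: "L = ((c1, c2), (d1, d2, d3))" by (metis prod.exhaust)
  show ?thesis
    by (simp add: \<xi> K L poly2_def map_poly_pCons mid_grad_simps field_simps power2_eq_square)
qed

lemma minors_vanish_if_jacobian_poly_eq_0:
  assumes "jacobian_poly K L = 0"
  shows "minors_vanish (fst K) (fst L) \<and> minors_vanish (snd K) (snd L)"
proof -
  obtain a1 a2 b1 b2 b3 where K: "K = ((a1, a2), (b1, b2, b3))" by (metis prod.exhaust)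
  obtain c1 c2 d1 d2 d3 where L: "L = ((c1, c2), (d1, d2, d3))" by (metis prod.exhaust)
  show ?thesis
    using assms by (auto simp: K L minors_vanish_def Basis_prod_def algebra_simps)
qed

lemma jacobian_poly_neq_0_for_some_pair:
  assumes "F.independent {lin_quad K, lin_quad L, lin_quad M}"
    and "distinct [lin_quad K, lin_quad L, lin_quad M]"
  shows "jacobian_poly K L \<noteq> 0 \<or> jacobian_poly K M \<noteq> 0 \<or> jacobian_poly L M \<noteq> 0"
proof (rule ccontr)
  assume contra: "\<not> ?thesis"
  have vanish: "minors_vanish (fst X) (fst Y) \<and> minors_vanish (snd X) (snd Y)"
    if "X \<in> {K, L, M}" "Y \<in> {K, L, M}" for X Y
  proof (cases "X = Y")
    case True
    then show ?thesis by (simp add: minors_vanish_refl)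
  next
    case False
    with that contra have "jacobian_poly X Y = 0 \<or> jacobian_poly Y X = 0"
      by auto
    then show ?thesis
      using minors_vanish_if_jacobian_poly_eq_0[of X Y] minors_vanish_if_jacobian_poly_eq_0[of Y X]
        minors_vanish_sym[of "fst Y" "fst X"] minors_vanish_sym[of "snd Y" "snd X"] by blast
  qed
  have "\<exists>p. fst ` {K, L, M} \<subseteq> span {p}"
    by (rule subset_span_singleton_if_minors_vanish) (use vanish in blast)
  then obtain p where p: "fst ` {K, L, M} \<subseteq> span {p}" ..
  have "\<exists>q. snd ` {K, L, M} \<subseteq> span {q}"
    by (rule subset_span_singleton_if_minors_vanish) (use vanish in blast)
  then obtain q where q: "snd ` {K, L, M} \<subseteq> span {q}" ..
  have "X \<in> span {(p, 0), (0, q)}" if "X \<in> {K, L, M}" for X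
  proof -
    have "fst X \<in> span {p}" "snd X \<in> span {q}"
      using p q that by blast+
    then obtain s t where "fst X = s *\<^sub>R p" "snd X = t *\<^sub>R q"
      by (auto simp: span_singleton)
    then have "X = s *\<^sub>R (p, 0) + t *\<^sub>R (0, q)"
      by (simp add: prod_eq_iff)
    then show ?thesis
      by (metis span_add span_base span_scale insertI1 insertI2)
  qed
  then have "{K, L, M} \<subseteq> span {(p, 0), (0, q)}"
    by blast
  then have "lin_quad ` {K, L, M} \<subseteq> F.span (lin_quad ` {(p, 0), (0, q)})"
    by (rule L.spans_image)
  then have "card (lin_quad ` {K, L, M}) \<le> card (lin_quad ` {(p, 0), (0, q)})"
    using F.independent_span_bound[of "lin_quad ` {(p, 0), (0, q)}" "lin_quad ` {K, L, M}"] assms(1)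
    by simp
  also have "\<dots> \<le> 2"
    by (rule order_trans[OF card_image_le]) (auto simp: card_insert_if)
  finally show False
    using assms(2) by simp
qed

theorem lemma7p4:
  fixes f g h :: "real \<times> real \<Rightarrow> real"
  assumes "f \<in> S12" and "g \<in> S12" and "h \<in> S12"
    and "distinct [f, g, h]"
    and "\<not> module.dependent fscale {f, g, h}"
  shows "AE \<xi> in lborel.
           vector_space.dim fscale
             ((\<lambda>p. pi12 (taylor2 \<xi> p)) ` S 3 + module.span fscale {f, g, h}) = 5"
proof -
  obtain K L M where fgh: "f = lin_quad K" "g = lin_quad L" "h = lin_quad M"
    using assms(1-3) S12_subset_range_lin_quad by blast
  then have "jacobian_poly K L \<noteq> 0 \<or> jacobian_poly K M \<noteq> 0 \<or> jacobian_poly L M \<noteq> 0"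
    using assms(4,5) by (intro jacobian_poly_neq_0_for_some_pair) auto
  then obtain X Y where
    XY: "lin_quad X \<in> {f, g, h}" "lin_quad Y \<in> {f, g, h}" "jacobian_poly X Y \<noteq> 0"
    using fgh by blast
  have "AE \<xi> in lborel. \<xi> \<noteq> 0 \<and> poly2 (jacobian_poly X Y) \<xi> \<noteq> 0"
    using AE_lborel_singleton AE_poly2_neq_0[OF XY(3)] by (rule AE_conjI)
  then show ?thesis
  proof eventually_elim
    case (elim \<xi>)
    have "{f, g, h} \<subseteq> range lin_quad"
      using fgh by blast
    then have "(\<lambda>p. pi12 (taylor2 \<xi> p)) ` S 3 + F.span {f, g, h} = range lin_quad"
      using elim XY(1,2) poly2_jacobian_poly[of X Y \<xi>]
      by (intro taylor_image_plus_span_eq_range_lin_quad[where K = X and L = Y]) simp_all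
    then show ?case
      by (simp add: dim_range_lin_quad)
  qed
qed

end
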